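(* $\mathrm{HS}_{\mathsf{ct}}\not\geq\mathrm{HS}_{\mathsf{st}}$: there is an $\mathrm{HS}$ formula $\psi$ such that no $\mathrm{HS}$ formula $\varphi$ satisfies, for every finite Kripke structure $K$, $K\models_{\mathsf{ct}}\varphi$ iff $K\models_{\mathsf{st}}\psi$.
   Context: A Kripke structure over a finite set $\mathcal{AP}$ is $K=(\mathcal{AP},S,\delta,\mu,s_0)$ with states $S$, left-total $\delta\subseteq S\times S$, labelling $\mu:S\to2^{\mathcal{AP}}$, initial state $s_0$; finite if $S$ is finite. A trace is a non-empty finite prefix of an infinite state sequence following $\delta$; initial if it starts at $s_0$. For a finite word $w=w(0)\cdots w(n)$, $\mathrm{Pref}(w)=\{w[0,i]\mid0\le i\le n-1\}$, $\mathrm{Suff}(w)=\{w[i,n]\mid1\le i\le n\}$. The computation tree $C(K)$ has as states the initial traces of $K$, initial state $s_0$, labelling $\rho\mapsto\mu(\text{last state of }\rho)$, transitions $(\rho,\rho\cdot s)$. $\mathrm{HS}$ formulas: $\psi::=p\mid\neg\psi\mid\psi\wedge\psi\mid\langle X\rangle\psi$ for the Allen relations $A,L,B,E,D,O$ and inverses; all definable (non-strict semantics) from $\langle B\rangle,\langle E\rangle,\langle\bar B\rangle,\langle\bar E\rangle$. State-based semantics over traces: $\rho\models p$ iff $p\in\mu(s)$ for every state $s$ of $\rho$; $\langle B\rangle\psi$: some $\rho'\in\mathrm{Pref}(\rho)$ satisfies $\psi$; $\langle E\rangle\psi$: some $\rho'\in\mathrm{Suff}(\rho)$; $\langle\bar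 B\rangle\psi$: some trace $\rho'$ with $\rho\in\mathrm{Pref}(\rho')$; $\langle\bar E\rangle\psi$: some trace $\rho'$ with $\rho\in\mathrm{Suff}(\rho')$. $K\models_{\mathsf{st}}\psi$ iff every initial trace satisfies $\psi$; $K\models_{\mathsf{ct}}\psi$ iff $C(K)\models_{\mathsf{st}}\psi$. *)

theory Defs
  imports Main
begin

text \<open>Kripke structures over the finite set of propositions UNIV :: 'ap set.\<close>
record ('ap, 's) kripke =
  St   :: "'s set"
  Tr   :: "('s \<times> 's) set"
  Lab  :: "'s \<Rightarrow> 'ap set"
  Init :: 's

definition kripke :: "('ap, 's) kripke \<Rightarrow> bool" where
  "kripke K \<longleftrightarrow> Init K \<in> St K \<and> Tr K \<subseteq> St K \<times> St K
     \<and> (\<forall>s\<in>St K. \<exists>t. (s, t) \<in> Tr K)"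

definition finite_kripke :: "('ap, 's) kripke \<Rightarrow> bool" where
  "finite_kripke K \<longleftrightarrow> kripke K \<and> finite (St K)"

definition trace :: "('ap, 's) kripke \<Rightarrow> 's list \<Rightarrow> bool" where
  "trace K \<rho> \<longleftrightarrow> (\<exists>f :: nat \<Rightarrow> 's. \<exists>n. n \<ge> 1 \<and> f 0 \<in> St K
     \<and> (\<forall>i. (f i, f (Suc i)) \<in> Tr K) \<and> \<rho> = map f [0..<n])"

definition init_trace :: "('ap, 's) kripke \<Rightarrow> 's list \<Rightarrow> bool" where
  "init_trace K \<rho> \<longleftrightarrow> trace K \<rho> \<and> hd \<rho> = Init K"

definition Pref :: "'a list \<Rightarrow> 'a list set" where
  "Pref w = {take (i + 1) w | i. i < length w - 1}"

definition Suff :: "'a list \<Rightarrow> 'a list set" where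
  "Suff w = {drop i w | i. 1 \<le> i \<and> i \<le> length w - 1}"

definition comp_tree :: "('ap, 's) kripke \<Rightarrow> ('ap, 's list) kripke" where
  "comp_tree K = \<lparr> St = {\<rho>. init_trace K \<rho>},
      Tr = {(\<rho>, \<rho> @ [s]) | \<rho> s. init_trace K \<rho> \<and> init_trace K (\<rho> @ [s])},
      Lab = (\<lambda>\<rho>. Lab K (last \<rho>)),
      Init = [Init K] \<rparr>"

text \<open>HS formulas, with the modalities B, E, B-bar, E-bar
  (all other Allen modalities are definable from these).\<close>
datatype 'ap hs =
    Prop 'ap
  | Neg "'ap hs"
  | Conj "'ap hs" "'ap hs"
  | DB "'ap hs"
  | DE "'ap hs"
  | DBbar "'ap hs"
  | DEbar "'ap hs"

fun sat :: "('ap, 's) kripke \<Rightarrow> 's list \<Rightarrow> 'ap hs \<Rightarrow> bool" where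
  "sat K \<rho> (Prop p) \<longleftrightarrow> (\<forall>s\<in>set \<rho>. p \<in> Lab K s)"
| "sat K \<rho> (Neg \<psi>) \<longleftrightarrow> \<not> sat K \<rho> \<psi>"
| "sat K \<rho> (Conj \<psi> \<chi>) \<longleftrightarrow> sat K \<rho> \<psi> \<and> sat K \<rho> \<chi>"
| "sat K \<rho> (DB \<psi>) \<longleftrightarrow> (\<exists>\<rho>'\<in>Pref \<rho>. sat K \<rho>' \<psi>)"
| "sat K \<rho> (DE \<psi>) \<longleftrightarrow> (\<exists>\<rho>'\<in>Suff \<rho>. sat K \<rho>' \<psi>)"
| "sat K \<rho> (DBbar \<psi>) \<longleftrightarrow> (\<exists>\<rho>'. trace K \<rho>' \<and> \<rho> \<in> Pref \<rho>' \<and> sat K \<rho>' \<psi>)"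
| "sat K \<rho> (DEbar \<psi>) \<longleftrightarrow> (\<exists>\<rho>'. trace K \<rho>' \<and> \<rho> \<in> Suff \<rho>' \<and> sat K \<rho>' \<psi>)"

definition models_st :: "('ap, 's) kripke \<Rightarrow> 'ap hs \<Rightarrow> bool" where
  "models_st K \<psi> \<longleftrightarrow> (\<forall>\<rho>. init_trace K \<rho> \<longrightarrow> sat K \<rho> \<psi>)"

definition models_ct :: "('ap, 's) kripke \<Rightarrow> 'ap hs \<Rightarrow> bool" where
  "models_ct K \<psi> \<longleftrightarrow> models_st (comp_tree K) \<psi>"

end

theory Submission
  imports Defs
begin

text \<open>Take the one-state loop \<open>loop_kripke\<close> with empty labels and add a second state, labelled
  with every proposition, that loops and has an edge into the initial state. The new state is
  unreachable from the initial state, so both structures have the same initial traces and hence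
  the same computation tree: no formula distinguishes them under \<open>models_ct\<close>. Under
  \<open>models_st\<close>, however, \<open>DEbar\<close> may extend a trace backwards into unreachable states, and
  \<open>DEbar (DB (Prop p))\<close> holds on every initial trace of the second structure but on none of
  the first.\<close>

lemma trace_subset_St:
  assumes "Tr K \<subseteq> St K \<times> St K" "trace K \<rho>"
  shows "set \<rho> \<subseteq> St K"
proof -
  obtain f n where f: "f 0 \<in> St K" "\<forall>i. (f i, f (Suc i)) \<in> Tr K" "\<rho> = map f [0..<n]"
    using assms(2) unfolding trace_def by blast
  have "f i \<in> St K" for i
    by (induction i) (use f(1,2) assms(1) in auto)
  then show ?thesis using f(3) by auto
qed

lemma Pref_subset_set: "\<rho>' \<in> Pref \<rho> \<Longrightarrow> set \<rho>' \<subseteq> set \<rho>"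
  unfolding Pref_def by (auto dest: in_set_takeD)

lemma Suff_subset_set: "\<rho>' \<in> Suff \<rho> \<Longrightarrow> set \<rho>' \<subseteq> set \<rho>"
  unfolding Suff_def by (auto dest: in_set_dropD)

lemma trace_cong: "St K' = St K \<Longrightarrow> Tr K' = Tr K \<Longrightarrow> trace K' = trace K"
  by (intro ext) (simp add: trace_def)

lemma sat_cong:
  assumes St: "St K' = St K" and Tr: "Tr K' = Tr K"
    and Lab: "\<And>s. s \<in> St K \<Longrightarrow> Lab K' s = Lab K s"
    and closed: "Tr K \<subseteq> St K \<times> St K"
    and "set \<rho> \<subseteq> St K"
  shows "sat K' \<rho> \<phi> \<longleftrightarrow> sat K \<rho> \<phi>"
  using \<open>set \<rho> \<subseteq> St K\<close>
proof (induction \<phi> arbitrary: \<rho>)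
  case (Prop p)
  then show ?case using Lab by auto
next
  case (DB \<phi>)
  then show ?case using Pref_subset_set by (simp, blast)
next
  case (DE \<phi>)
  then show ?case using Suff_subset_set by (simp, blast)
next
  case (DBbar \<phi>)
  then show ?case using trace_subset_St[OF closed] by (simp add: trace_cong[OF St Tr], blast)
next
  case (DEbar \<phi>)
  then show ?case using trace_subset_St[OF closed] by (simp add: trace_cong[OF St Tr], blast)
qed simp_all

lemma models_st_cong:
  assumes St: "St K' = St K" and Tr: "Tr K' = Tr K" and Init: "Init K' = Init K"
    and Lab: "\<And>s. s \<in> St K \<Longrightarrow> Lab K' s = Lab K s"
    and closed: "Tr K \<subseteq> St K \<times> St K"
  shows "models_st K' \<phi> \<longleftrightarrow> models_st K \<phi>"
proof -
  have "init_trace K' = init_trace K"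
    unfolding init_trace_def by (simp add: trace_cong[OF St Tr] Init)
  moreover have "sat K' \<rho> \<phi> \<longleftrightarrow> sat K \<rho> \<phi>" if "init_trace K \<rho>" for \<rho>
    using that trace_subset_St[OF closed] sat_cong[OF St Tr Lab closed]
    unfolding init_trace_def by blast
  ultimately show ?thesis unfolding models_st_def by auto
qed

lemma models_ct_cong:
  assumes init: "init_trace K' = init_trace K" and Init: "Init K' = Init K"
    and Lab: "\<And>\<rho>. init_trace K \<rho> \<Longrightarrow> Lab K' (last \<rho>) = Lab K (last \<rho>)"
  shows "models_ct K' \<phi> \<longleftrightarrow> models_ct K \<phi>"
  unfolding models_ct_def
  by (rule models_st_cong) (auto simp: comp_tree_def init Init Lab)

lemma init_trace_of_loop:
  assumes "Init K \<in> St K" "(Init K, Init K) \<in> Tr K"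
    and only_loop: "\<And>t. (Init K, t) \<in> Tr K \<Longrightarrow> t = Init K"
  shows "init_trace K \<rho> \<longleftrightarrow> (\<exists>n\<ge>1. \<rho> = replicate n (Init K))"
proof
  assume "init_trace K \<rho>"
  then obtain f n where f: "n \<ge> 1" "\<forall>i. (f i, f (Suc i)) \<in> Tr K" "\<rho> = map f [0..<n]"
      "hd \<rho> = Init K"
    unfolding init_trace_def trace_def by blast
  have "f 0 = Init K" using f(1,3,4) by (cases n) (auto simp: upt_rec)
  then have "f i = Init K" for i
    by (induction i) (use f(2) only_loop in metis)+
  then have "f = (\<lambda>_. Init K)" by blast
  then have "\<rho> = replicate n (Init K)"
    using f(3) by (simp add: map_replicate_const)
  then show "\<exists>n\<ge>1. \<rho> = replicate n (Init K)" using f(1) by blast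
next
  assume "\<exists>n\<ge>1. \<rho> = replicate n (Init K)"
  then obtain n where n: "n \<ge> 1" "\<rho> = replicate n (Init K)" by blast
  have "trace K \<rho>"
    unfolding trace_def using n assms(1,2)
    by (intro exI[of _ "\<lambda>_. Init K"] exI[of _ n]) (simp add: map_replicate_const)
  moreover have "hd \<rho> = Init K" using n by (cases n) auto
  ultimately show "init_trace K \<rho>" unfolding init_trace_def by blast
qed

definition loop_kripke :: "('ap, nat) kripke" where
  "loop_kripke = \<lparr>St = {0}, Tr = {(0, 0)}, Lab = (\<lambda>s. {}), Init = 0\<rparr>"

definition loop_kripke_with_pred :: "('ap, nat) kripke" where
  "loop_kripke_with_pred = \<lparr>St = {0, 1}, Tr = {(0, 0), (1, 0), (1, 1)},
     Lab = (\<lambda>s. if s = 1 then UNIV else {}), Init = 0\<rparr>"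

definition past_prop :: "'ap \<Rightarrow> 'ap hs" where
  "past_prop p = DEbar (DB (Prop p))"

lemma finite_kripke_loop: "finite_kripke loop_kripke"
  by (simp add: finite_kripke_def kripke_def loop_kripke_def)

lemma finite_kripke_loop_with_pred: "finite_kripke loop_kripke_with_pred"
  by (auto simp: finite_kripke_def kripke_def loop_kripke_with_pred_def)

lemma init_trace_loop_kripke:
  "init_trace loop_kripke \<rho> \<longleftrightarrow> (\<exists>n\<ge>1. \<rho> = replicate n 0)"
  using init_trace_of_loop[of loop_kripke] by (simp add: loop_kripke_def)

lemma init_trace_loop_kripke_with_pred:
  "init_trace loop_kripke_with_pred \<rho> \<longleftrightarrow> (\<exists>n\<ge>1. \<rho> = replicate n 0)"
  using init_trace_of_loop[of loop_kripke_with_pred] by (simp add: loop_kripke_with_pred_def)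

lemma models_ct_loop_with_pred_iff:
  "models_ct (loop_kripke_with_pred :: ('ap, nat) kripke) \<phi> \<longleftrightarrow>
     models_ct (loop_kripke :: ('ap, nat) kripke) \<phi>"
proof (rule models_ct_cong)
  show "init_trace (loop_kripke_with_pred :: ('ap, nat) kripke) = init_trace loop_kripke"
    by (intro ext) (simp only: init_trace_loop_kripke init_trace_loop_kripke_with_pred)
  show "Init (loop_kripke_with_pred :: ('ap, nat) kripke) = Init loop_kripke"
    by (simp add: loop_kripke_def loop_kripke_with_pred_def)
  fix \<rho> assume "init_trace (loop_kripke :: ('ap, nat) kripke) \<rho>"
  then have "last \<rho> = 0" by (auto simp: init_trace_loop_kripke)
  then show "Lab (loop_kripke_with_pred :: ('ap, nat) kripke) (last \<rho>) = Lab loop_kripke (last \<rho>)"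
    by (simp add: loop_kripke_def loop_kripke_with_pred_def)
qed

lemma models_st_loop_with_pred_past_prop: "models_st loop_kripke_with_pred (past_prop p)"
  unfolding models_st_def
proof (intro allI impI)
  fix \<rho> assume "init_trace loop_kripke_with_pred \<rho>"
  then obtain n where n: "n \<ge> 1" "\<rho> = replicate n 0"
    by (auto simp: init_trace_loop_kripke_with_pred)
  have "trace loop_kripke_with_pred (1 # \<rho>)"
    unfolding trace_def using n
    by (intro exI[of _ "\<lambda>i. if i = 0 then 1 else 0"] exI[of _ "Suc n"])
      (auto simp: loop_kripke_with_pred_def map_replicate_const map_upt_Suc simp del: upt_Suc)
  moreover have "\<rho> \<in> Suff (1 # \<rho>)" unfolding Suff_def using n by (auto intro!: exI[of _ 1])
  moreover have "[1] \<in> Pref (1 # \<rho>)" unfolding Pref_def using n by (auto intro!: exI[of _ 0])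
  moreover have "sat loop_kripke_with_pred [1] (Prop p)"
    by (simp add: loop_kripke_with_pred_def)
  ultimately show "sat loop_kripke_with_pred \<rho> (past_prop p)"
    by (simp only: past_prop_def sat.simps) blast
qed

lemma not_models_st_loop_past_prop: "\<not> models_st loop_kripke (past_prop p)"
proof -
  have "init_trace loop_kripke [0]" by (simp add: init_trace_loop_kripke exI[of _ 1])
  moreover have "\<not> sat loop_kripke \<rho> (DB (Prop p))" for \<rho>
    by (auto simp: Pref_def loop_kripke_def)
  ultimately show ?thesis unfolding models_st_def past_prop_def by auto
qed

theorem proposition5p1:
  "\<exists>\<psi> :: ('ap :: finite) hs. \<not> (\<exists>\<phi> :: 'ap hs.
      \<forall>K :: ('ap, nat) kripke. finite_kripke K \<longrightarrow> (models_ct K \<phi> \<longleftrightarrow> models_st K \<psi>))"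
proof (intro exI[of _ "past_prop undefined"] notI)
  assume "\<exists>\<phi> :: 'ap hs. \<forall>K :: ('ap, nat) kripke.
    finite_kripke K \<longrightarrow> (models_ct K \<phi> \<longleftrightarrow> models_st K (past_prop undefined))"
  then obtain \<phi> :: "'ap hs" where
    \<phi>: "\<And>K :: ('ap, nat) kripke. finite_kripke K \<Longrightarrow>
      models_ct K \<phi> \<longleftrightarrow> models_st K (past_prop undefined)"
    by blast
  show False
    using \<phi>[OF finite_kripke_loop] \<phi>[OF finite_kripke_loop_with_pred]
      models_ct_loop_with_pred_iff[of \<phi>]
      models_st_loop_with_pred_past_prop[of undefined] not_models_st_loop_past_prop[of undefined]
    by blast
qed

end
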